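(* Let $\mathbf{H}\in\mathbb{R}^{m\times n}$ have full column rank, with rows indexed by sensors and columns by state variables. Let $\mathcal{S}_o\subseteq\{1,\dots,m\}$, let $\mathbf{H}_o$ be the submatrix of $\mathbf{H}$ consisting of the rows indexed by $\mathcal{S}_o$, and let $\mathcal{X}_o$ be the set of indices of the nonzero columns of $\mathbf{H}_o$. Suppose that (i) the state variables in $\mathcal{X}_o$ are observable with respect to $\mathcal{S}_o$; (ii) $\mathcal{C}\subseteq\mathcal{S}_o$ is a critical set with respect to $(\mathcal{S}_o,\mathcal{X}_o)$; (iii) the submatrix of $\mathbf{H}$ obtained by removing the rows indexed by $\mathcal{C}$ does not have full column rank. Let $\mathbf{U}_o\in\mathbb{R}^{|\mathcal{S}_o|\times|\mathcal{X}_o|}$ be a matrix whose columns form a basis of $\mathcal{R}(\mathbf{H}_o)$, and let $\bar{\mathbf{U}}_o$ be the submatrix of $\mathbf{U}_o$ obtained by removing the rows corresponding to sensors in $\mathcal{C}$. Then: (1) $\mathcal{N}(\bar{\mathbf{U}}_o)$ has dimension one; (2) for any nonzero $\mathbf{v}\in\mathcal{N}(\bar{\mathbf{U}}_o)$, the vector $\mathbf{a}\in\mathbb{R}^m$ with $a_i$ equal to the entry of $\mathbf{U}_o\mathbf{v}$ corresponding to sensor $i$ for $i\in\mathcal{C}$ and $a_i=0$ for $i\notin\mathcal{C}$ is an unobservable attack, i.e., $\mathbf{a}\neq\mathbf{0}$ and $\mathbf{a}\in\mathcal{R}(\mathbf{H})$.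
   Context: Linearized model $\mathbf{z}=\mathbf{H}\mathbf{x}+\mathbf{e}$. For a sensor set $\mathcal{S}$ and set of state variables $\mathcal{X}$, let $\mathbf{H}_{\mathcal{S}}$ keep only the rows of $\mathbf{H}$ in $\mathcal{S}$; the variables in $\mathcal{X}$ are observable with respect to $\mathcal{S}$ if every vector in $\mathcal{N}(\mathbf{H}_{\mathcal{S}})$ vanishes on all coordinates in $\mathcal{X}$. When this holds, $\mathcal{C}\subseteq\mathcal{S}$ is a critical set with respect to $(\mathcal{S},\mathcal{X})$ if the variables in $\mathcal{X}$ are not observable with respect to $\mathcal{S}\setminus\mathcal{C}$ but are observable with respect to $\mathcal{S}\setminus\mathcal{C}'$ for every strict subset $\mathcal{C}'\subsetneq\mathcal{C}$. An attack adding $\mathbf{a}$ to the data is unobservable iff $\mathbf{a}\neq\mathbf{0}$ and $\mathbf{a}\in\mathcal{R}(\mathbf{H})$. *)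

theory Defs
  imports "HOL-Analysis.Analysis"
begin

text \<open>For a row set S, the row submatrix A_S is represented
implicitly: its null space is the set of x with (A x)_i = 0 for all i in S, and
its range is identified (via the coordinates indexed by S) with the vectors
(A x) restricted to S, padded with zeros outside S.\<close>

definition nullspace_rows :: "real^'n^'m \<Rightarrow> 'm set \<Rightarrow> (real^'n) set" where
  "nullspace_rows A S = {x. \<forall>i\<in>S. (A *v x) $ i = 0}"

definition restrict_rows :: "'m set \<Rightarrow> real^'m \<Rightarrow> real^'m" where
  "restrict_rows S y = (\<chi> i. if i \<in> S then y $ i else 0)"

definition range_rows :: "real^'n^'m \<Rightarrow> 'm set \<Rightarrow> (real^'m) set" where
  "range_rows A S = restrict_rows S ` range (\<lambda>x. A *v x)"

definition observable :: "real^'n^'m \<Rightarrow> 'm set \<Rightarrow> 'n set \<Rightarrow> bool" where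
  "observable H S X \<longleftrightarrow> (\<forall>x \<in> nullspace_rows H S. \<forall>j\<in>X. x $ j = 0)"

definition critical_set :: "real^'n^'m \<Rightarrow> 'm set \<Rightarrow> 'n set \<Rightarrow> 'm set \<Rightarrow> bool" where
  "critical_set H S X C \<longleftrightarrow> C \<subseteq> S \<and> observable H S X \<and> \<not> observable H (S - C) X
     \<and> (\<forall>C'. C' \<subset> C \<longrightarrow> observable H (S - C') X)"

definition nonzero_cols :: "real^'n^'m \<Rightarrow> 'm set \<Rightarrow> 'n set" where
  "nonzero_cols H S = {j. \<exists>i\<in>S. H $ i $ j \<noteq> 0}"

definition columns_basis_of_range :: "real^'k^'m \<Rightarrow> 'm set \<Rightarrow> real^'n^'m \<Rightarrow> bool" where
  "columns_basis_of_range U S H \<longleftrightarrow> range_rows U S = range_rows H S \<and> nullspace_rows U S = {0}"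

definition unobservable_attack :: "real^'n^'m \<Rightarrow> real^'m \<Rightarrow> bool" where
  "unobservable_attack H a \<longleftrightarrow> a \<noteq> 0 \<and> a \<in> range (\<lambda>x. H *v x)"

end

theory Submission
  imports Defs
begin

text \<open>Minimality of the critical set C makes the restrictions to S_o of all vectors H x
vanishing on S_o - C collinear: if H x1 is nonzero at c \<in> C, a suitable combination
x = x2 - t x1 has H x vanishing on S_o - (C - {c}), so x vanishes on the nonzero columns of
H_o, whence H_o x = 0. By (iii) and full column rank there is z with H z nonzero and
supported on C, so this line is spanned by H z. Since U_o is injective with the same range
as H_o, the line pulls back to the null space of the reduced matrix, which is therefore
spanned by the preimage v0 of H z; and for v = t v0 the attack vector is t H z.\<close>

lemma restrict_rows_apply [simp]: "restrict_rows S y $ i = (if i \<in> S then y $ i else 0)"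
  by (simp add: restrict_rows_def)

lemma restrict_rows_zero [simp]: "restrict_rows S 0 = 0"
  by (simp add: vec_eq_iff)

lemma restrict_rows_scaleR: "restrict_rows S (t *\<^sub>R y) = t *\<^sub>R restrict_rows S y"
  by (simp add: vec_eq_iff)

lemma restrict_rows_diff: "restrict_rows S (y - y') = restrict_rows S y - restrict_rows S y'"
  by (simp add: vec_eq_iff)

lemma restrict_rows_restrict_rows:
  "T \<subseteq> S \<Longrightarrow> restrict_rows T (restrict_rows S y) = restrict_rows T y"
  by (auto simp: vec_eq_iff)

lemma restrict_rows_id: "(\<And>i. i \<notin> S \<Longrightarrow> y $ i = 0) \<Longrightarrow> restrict_rows S y = y"
  by (simp add: vec_eq_iff)

lemma nullspace_rows_iff_restrict_rows:
  "x \<in> nullspace_rows A S \<longleftrightarrow> restrict_rows S (A *v x) = 0"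
  by (auto simp: nullspace_rows_def vec_eq_iff)

lemma subspace_nullspace_rows: "subspace (nullspace_rows A S)"
  unfolding subspace_def nullspace_rows_def
  by (auto simp: matrix_vector_right_distrib matrix_vector_mult_scaleR)

lemma nullspace_rows_transfer:
  assumes "restrict_rows S (A *v x) = restrict_rows S (B *v y)" and "T \<subseteq> S"
  shows "x \<in> nullspace_rows A T \<longleftrightarrow> y \<in> nullspace_rows B T"
  using restrict_rows_restrict_rows[OF assms(2), of "A *v x"]
    restrict_rows_restrict_rows[OF assms(2), of "B *v y"] assms(1)
  by (simp add: nullspace_rows_iff_restrict_rows)

lemma nullspace_rows_zero_on_nonzero_cols:
  assumes "\<forall>j \<in> nonzero_cols H S. x $ j = 0"
  shows "x \<in> nullspace_rows H S"
  unfolding nullspace_rows_def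
proof (intro CollectI ballI)
  fix i assume "i \<in> S"
  then have "H $ i $ j * x $ j = 0" for j
    using assms by (auto simp: nonzero_cols_def)
  then show "(H *v x) $ i = 0" by (simp add: matrix_vector_mult_def sum.neutral)
qed

lemma columns_basis_of_range_inj:
  assumes "columns_basis_of_range U S H"
    and "restrict_rows S (U *v w) = restrict_rows S (U *v w')"
  shows "w = w'"
proof -
  have "restrict_rows S (U *v (w - w')) = 0"
    using assms(2) by (simp add: matrix_vector_mult_diff_distrib restrict_rows_diff)
  then have "w - w' \<in> nullspace_rows U S" by (simp add: nullspace_rows_iff_restrict_rows)
  then show ?thesis using assms(1) by (simp add: columns_basis_of_range_def)
qed

lemma critical_set_images_collinear:
  fixes H :: "real^'n^'m"
  assumes crit: "critical_set H So (nonzero_cols H So) C"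
    and x1: "x1 \<in> nullspace_rows H (So - C)" and x2: "x2 \<in> nullspace_rows H (So - C)"
    and nz: "restrict_rows So (H *v x1) \<noteq> 0"
  obtains t where "restrict_rows So (H *v x2) = t *\<^sub>R restrict_rows So (H *v x1)"
proof -
  from nz obtain c where cS: "c \<in> So" and c1: "(H *v x1) $ c \<noteq> 0"
    by (auto simp: vec_eq_iff split: if_splits)
  have cC: "c \<in> C" using x1 cS c1 by (auto simp: nullspace_rows_def)
  define t where "t = (H *v x2) $ c / (H *v x1) $ c"
  define x where "x = x2 - t *\<^sub>R x1"
  have Hx: "H *v x = H *v x2 - t *\<^sub>R (H *v x1)"
    by (simp add: x_def matrix_vector_mult_diff_distrib matrix_vector_mult_scaleR)
  have "x \<in> nullspace_rows H (So - (C - {c}))"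
    unfolding nullspace_rows_def
  proof (intro CollectI ballI)
    fix i assume i: "i \<in> So - (C - {c})"
    show "(H *v x) $ i = 0"
    proof (cases "i = c")
      case True then show ?thesis using c1 by (simp add: Hx t_def)
    next
      case False then show ?thesis using i x1 x2 by (simp add: Hx nullspace_rows_def)
    qed
  qed
  moreover have "observable H (So - (C - {c})) (nonzero_cols H So)"
    using crit cC unfolding critical_set_def by auto
  ultimately have "\<forall>j \<in> nonzero_cols H So. x $ j = 0"
    unfolding observable_def by blast
  then have "restrict_rows So (H *v x) = 0"
    using nullspace_rows_zero_on_nonzero_cols nullspace_rows_iff_restrict_rows by blast
  then have "restrict_rows So (H *v x2) = t *\<^sub>R restrict_rows So (H *v x1)"
    by (simp add: Hx restrict_rows_diff restrict_rows_scaleR)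
  then show thesis by (rule that)
qed

lemma critical_set_basis_nullspace_eq_span:
  fixes H :: "real^'n^'m" and U :: "real^'k^'m"
  assumes crit: "critical_set H So (nonzero_cols H So) C"
    and basis: "columns_basis_of_range U So H"
    and z: "z \<in> nullspace_rows H (So - C)" and Hz: "restrict_rows So (H *v z) \<noteq> 0"
    and v0: "restrict_rows So (U *v v0) = restrict_rows So (H *v z)"
  shows "nullspace_rows U (So - C) = span {v0}"
proof
  have "v0 \<in> nullspace_rows U (So - C)"
    using nullspace_rows_transfer[OF v0] z by blast
  then show "span {v0} \<subseteq> nullspace_rows U (So - C)"
    by (simp add: span_minimal subspace_nullspace_rows)
  show "nullspace_rows U (So - C) \<subseteq> span {v0}"
  proof
    fix v assume vN: "v \<in> nullspace_rows U (So - C)"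
    have "restrict_rows So (U *v v) \<in> range_rows H So"
      using basis unfolding columns_basis_of_range_def range_rows_def by (metis rangeI image_eqI)
    then obtain x where x: "restrict_rows So (U *v v) = restrict_rows So (H *v x)"
      by (auto simp: range_rows_def)
    have "x \<in> nullspace_rows H (So - C)"
      using nullspace_rows_transfer[OF x] vN by blast
    then obtain t where "restrict_rows So (H *v x) = t *\<^sub>R restrict_rows So (H *v z)"
      using critical_set_images_collinear[OF crit z _ Hz] by blast
    then have "restrict_rows So (U *v v) = restrict_rows So (U *v (t *\<^sub>R v0))"
      by (simp add: x v0 matrix_vector_mult_scaleR restrict_rows_scaleR)
    then have "v = t *\<^sub>R v0" by (rule columns_basis_of_range_inj[OF basis])
    then show "v \<in> span {v0}" by (simp add: span_base span_mul)
  qed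
qed

theorem corollary1:
  fixes H :: "real^'n^'m" and U :: "real^'k^'m" and So C :: "'m set"
  assumes "nullspace_rows H UNIV = {0}"
    and "observable H So (nonzero_cols H So)"
    and "critical_set H So (nonzero_cols H So) C"
    and "nullspace_rows H (UNIV - C) \<noteq> {0}"
    and "CARD('k) = card (nonzero_cols H So)"
    and "columns_basis_of_range U So H"
  shows "dim (nullspace_rows U (So - C)) = 1 \<and>
    (\<forall>v \<in> nullspace_rows U (So - C). v \<noteq> 0 \<longrightarrow>
       unobservable_attack H (\<chi> i. if i \<in> C then (U *v v) $ i else 0))"
proof -
  have CS: "C \<subseteq> So" using assms(3) by (simp add: critical_set_def)
  obtain z where zN: "z \<in> nullspace_rows H (UNIV - C)" and "z \<noteq> 0"
    using assms(4) subspace_0[OF subspace_nullspace_rows] by blast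
  then have Hz: "H *v z \<noteq> 0"
    using assms(1) by (auto simp: nullspace_rows_def)
  have HzC: "restrict_rows C (H *v z) = H *v z"
    using zN by (intro restrict_rows_id) (simp add: nullspace_rows_def)
  have HzSo: "restrict_rows So (H *v z) = H *v z"
    using zN CS by (intro restrict_rows_id) (auto simp: nullspace_rows_def)
  have "restrict_rows So (H *v z) \<in> range_rows U So"
    using assms(6) by (simp add: columns_basis_of_range_def range_rows_def)
  then obtain v0 where v0: "restrict_rows So (U *v v0) = restrict_rows So (H *v z)"
    by (auto simp: range_rows_def)
  have "z \<in> nullspace_rows H (So - C)" using zN by (auto simp: nullspace_rows_def)
  then have N: "nullspace_rows U (So - C) = span {v0}"
    using critical_set_basis_nullspace_eq_span[OF assms(3,6) _ _ v0] Hz HzSo by simp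
  have "v0 \<noteq> 0"
  proof
    assume "v0 = 0"
    then have "restrict_rows So (H *v z) = 0" using v0 by simp
    then show False using Hz HzSo by simp
  qed
  then have "dim (nullspace_rows U (So - C)) = 1"
    by (simp add: N dim_span_eq_card_independent)
  moreover have "unobservable_attack H (\<chi> i. if i \<in> C then (U *v v) $ i else 0)"
    if v: "v \<in> span {v0}" "v \<noteq> 0" for v
  proof -
    obtain t where t: "v = t *\<^sub>R v0" "t \<noteq> 0" using v by (auto simp: span_singleton)
    have "(\<chi> i. if i \<in> C then (U *v v) $ i else 0) = t *\<^sub>R restrict_rows C (U *v v0)"
      by (simp add: vec_eq_iff t matrix_vector_mult_scaleR)
    also have "\<dots> = H *v (t *\<^sub>R z)"
      using restrict_rows_restrict_rows[OF CS] v0 HzSo HzC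
      by (metis matrix_vector_mult_scaleR)
    finally have "(\<chi> i. if i \<in> C then (U *v v) $ i else 0) = H *v (t *\<^sub>R z)" .
    moreover have "H *v (t *\<^sub>R z) \<noteq> 0"
      using t Hz by (simp add: matrix_vector_mult_scaleR)
    ultimately show ?thesis by (simp add: unobservable_attack_def)
  qed
  ultimately show ?thesis using N by blast
qed

end
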